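(* Assume the setting described in the context. There exists a sequence of families $\{\gamma_l^{\epsilon^k}\}_{l=1}^k\subset\Gamma$, indexed by $\epsilon^k\in\Sigma_d^k$, $k\in\mathbb{N}$, such that, setting $V_{\epsilon^k}=\gamma_1^{\epsilon^k}\circ g_{\epsilon_1}\circ\dots\circ\gamma_k^{\epsilon^k}\circ g_{\epsilon_k}(\mathbb{D})$, the following hold: (1) for all $k\geq 2$ and all $\epsilon^k$: $V_{\epsilon^k}\subset V_{\epsilon^{k-1}}$, where $\epsilon^{k-1}=(\epsilon_1,\dots,\epsilon_{k-1})$; (2) for all $k\geq 2$, all $\epsilon^k$ and all $l=2,\dots,k$: $\gamma_l^{\epsilon^k}=\gamma_{l-1}^{\sigma(\epsilon^k)}$, where $\sigma(\epsilon^k)=(\epsilon_2,\dots,\epsilon_k)$; (3) for all $k\geq 1$ and all $\epsilon^k,\widehat{\epsilon}^k\in\Sigma_d^k$: if $\phi(V_{\epsilon^k})=\phi(V_{\widehat{\epsilon}^k})$ then $V_{\epsilon^k}=V_{\widehat{\epsilon}^k}$.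
   Context: Setting: $U\subset\mathbb{C}$ is a domain conformally isomorphic to $\mathbb{D}$; $U'=U_1\cup\dots\cup U_N$ is relatively compact in $U$, with the $U_i$ pairwise disjoint domains each conformally isomorphic to $\mathbb{D}$; $f:U'\to U$ is a proper holomorphic map of degree $d>1$ (sum of the degrees of $f:U_i\to U$); $K_f=\{z\in U': f^n(z)\in U'\ \forall n\}$, $J_f=\partial K_f$, and it is assumed that $K_f=J_f$ is a Cantor set containing all critical points of $f$. Fix $w\in U\setminus U'$, let $w_0,\dots,w_{d-1}$ be its $d$ distinct preimages under $f$, and let $i(j)$ be defined by $w_j\in U_{i(j)}$. Let $\phi:\mathbb{D}\to U\setminus J_f$ be a universal covering with $\phi(0)=w$, and let $\Gamma$ be its group of deck transformations (automorphisms $\gamma$ of $\mathbb{D}$ with $\phi\circ\gamma=\phi$). For each $i$ fix a connected component $V_i$ of $\phi^{-1}(U_i\setminus J_f)$, and let $g_0,\dots,g_{d-1}:\mathbb{D}\to\mathbb{D}$ be univalent holomorphic maps with $f\circ\phi\circ g_j=\phi$, $\phi(g_j(0))=w_j$ and $g_j(\mathbb{D})=V_{i(j)}$. $\Sigma_d^k=\{0,\dots,d-1\}^k$ is the set of $k$-blocks $\epsilon^k=(\epsilon_1,\dots,\epsilon_k)$, and $\sigma$ acts on blocks by $\sigma(\epsilon_1,\dots,\epsilon_k)=(\epsilon_2,\dots,\epsilon_k)$. *)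

theory Defs
  imports "HOL-Complex_Analysis.Complex_Analysis"
begin

abbreviation unit_disc :: "complex set" where "unit_disc \<equiv> ball 0 1"

definition conf_disc :: "complex set \<Rightarrow> bool" where
  "conf_disc S \<longleftrightarrow> open S \<and> connected S \<and>
     (\<exists>h. h holomorphic_on S \<and> inj_on h S \<and> h ` S = unit_disc)"

definition proper_on :: "(complex \<Rightarrow> complex) \<Rightarrow> complex set \<Rightarrow> complex set \<Rightarrow> bool" where
  "proper_on f A B \<longleftrightarrow> continuous_on A f \<and> f ` A \<subseteq> B \<and>
     (\<forall>K. compact K \<and> K \<subseteq> B \<longrightarrow> compact {z\<in>A. f z \<in> K})"

definition hol_degree :: "(complex \<Rightarrow> complex) \<Rightarrow> complex set \<Rightarrow> complex set \<Rightarrow> nat \<Rightarrow> bool" where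
  "hol_degree f A B d \<longleftrightarrow>
     (\<forall>y\<in>B. finite {z\<in>A. f z = y} \<and>
        (\<Sum>z\<in>{z\<in>A. f z = y}. nat (zorder (\<lambda>x. f x - y) z)) = d)"

definition filled_set :: "(complex \<Rightarrow> complex) \<Rightarrow> complex set \<Rightarrow> complex set" where
  "filled_set f U' = {z\<in>U'. \<forall>n. (f ^^ n) z \<in> U'}"

definition julia_set :: "(complex \<Rightarrow> complex) \<Rightarrow> complex set \<Rightarrow> complex set" where
  "julia_set f U' = frontier (filled_set f U')"

definition cantor_set :: "complex set \<Rightarrow> bool" where
  "cantor_set S \<longleftrightarrow> S \<noteq> {} \<and> compact S \<and> (\<forall>x\<in>S. x islimpt S) \<and>
     (\<forall>C. C \<subseteq> S \<and> connected C \<longrightarrow> (\<exists>a. C \<subseteq> {a}))"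

definition deck_group :: "(complex \<Rightarrow> complex) \<Rightarrow> (complex \<Rightarrow> complex) set" where
  "deck_group \<phi> = {\<gamma>. \<gamma> holomorphic_on unit_disc \<and> bij_betw \<gamma> unit_disc unit_disc \<and>
                        (\<forall>z\<in>unit_disc. \<phi> (\<gamma> z) = \<phi> z)}"

text \<open>For a family gam (gam eps l = gamma_l^eps, l = 1..length eps) and maps g_j,
  the composite gamma_1 o g_{eps_1} o ... o gamma_k o g_{eps_k}.\<close>
definition block_map :: "(nat list \<Rightarrow> nat \<Rightarrow> complex \<Rightarrow> complex) \<Rightarrow> (nat \<Rightarrow> complex \<Rightarrow> complex)
     \<Rightarrow> nat list \<Rightarrow> complex \<Rightarrow> complex" where
  "block_map gam g eps = foldr (\<circ>) (map (\<lambda>l. gam eps (Suc l) \<circ> g (eps ! l)) [0..<length eps]) id"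

definition block_set :: "(nat list \<Rightarrow> nat \<Rightarrow> complex \<Rightarrow> complex) \<Rightarrow> (nat \<Rightarrow> complex \<Rightarrow> complex)
     \<Rightarrow> nat list \<Rightarrow> complex set" where
  "block_set gam g eps = block_map gam g eps ` unit_disc"

end

theory Submission imports Defs begin

(* Let \<Omega>_m be the set of points of U - J whose first m iterates stay in U' - J.
   Each lift g_j maps a component of \<phi>^-1(\<Omega>_m) onto a component of \<phi>^-1(\<Omega>_(m+1)), and since
   the disc is simply connected, the deck group acts transitively on the components of \<phi>^-1(W)
   lying over a common point.
   Letting \<gamma>_l^\<epsilon> depend only on the suffix (\<epsilon>_l, ..., \<epsilon>_k) makes (2) automatic, and then
   V_\<epsilon> = \<gamma>_1^\<epsilon>(g_\<epsilon>1(V_\<sigma>\<epsilon>)). By induction on k, \<gamma>_1^\<epsilon> is chosen so that V_\<epsilon> is a component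
   of \<phi>^-1(\<Omega>_k) inside its parent V_(\<epsilon>1..\<epsilon>(k-1)): some deck transformation moves g_\<epsilon>1(V_\<sigma>\<epsilon>)
   into the parent, and among these translates we take one depending only on the parent and on
   the projection \<phi>(g_\<epsilon>1(V_\<sigma>\<epsilon>)). By (3) at level k - 1 the parent is itself determined by that
   projection, which gives (3) at level k. *)

section \<open>Deck transformations of a covering of the disc\<close>

lemma deck_groupD:
  assumes "\<gamma> \<in> deck_group \<phi>"
  shows "\<gamma> holomorphic_on unit_disc" "inj_on \<gamma> unit_disc" "\<gamma> ` unit_disc = unit_disc"
    and "\<And>z. z \<in> unit_disc \<Longrightarrow> \<phi> (\<gamma> z) = \<phi> z"
  using assms by (auto simp: deck_group_def bij_betw_def)

lemma id_in_deck_group: "id \<in> deck_group \<phi>"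
  by (simp add: deck_group_def)

lemma image_deck_group:
  assumes "\<gamma> \<in> deck_group \<phi>" "S \<subseteq> unit_disc"
  shows "\<phi> ` \<gamma> ` S = \<phi> ` S"
  using deck_groupD(4)[OF assms(1)] assms(2) by (force simp: image_image cong: image_cong)

lemma holomorphic_inj_continuous_inverse:
  assumes "F holomorphic_on S" "open S" "inj_on F S"
  obtains G where "continuous_on (F ` S) G" "\<And>z. z \<in> S \<Longrightarrow> G (F z) = z"
  using holomorphic_has_inverse[OF assms] holomorphic_on_imp_continuous_on by metis

lemma image_in_components:
  assumes C: "C \<in> components S" and SX: "S \<subseteq> X"
    and F: "continuous_on X F" "F ` S \<subseteq> T" "F ` X \<inter> T \<subseteq> F ` S"
    and G: "continuous_on (F ` X) G" "\<And>x. x \<in> X \<Longrightarrow> G (F x) = x"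
    and reach: "\<And>Z. Z \<in> components T \<Longrightarrow> F ` C \<subseteq> Z \<Longrightarrow> Z \<subseteq> F ` X"
  shows "F ` C \<in> components T"
proof -
  have CS: "C \<subseteq> S" "C \<noteq> {}" "connected C"
    using in_components_subset[OF C] in_components_nonempty[OF C] in_components_connected[OF C] .
  have FC: "F ` C \<subseteq> T" "F ` C \<noteq> {}"
    using CS(1,2) F(2) by blast+
  have "connected (F ` C)"
    using connected_continuous_image[OF continuous_on_subset[OF F(1)] CS(3)] CS(1) SX by blast
  then obtain Z where Z: "Z \<in> components T" "F ` C \<subseteq> Z"
    using exists_component_superset[OF FC(1)] FC by blast
  have ZX: "Z \<subseteq> F ` X" and ZT: "Z \<subseteq> T"
    using reach[OF Z] in_components_subset[OF Z(1)] by simp_all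
  have "G ` Z \<subseteq> S"
  proof
    fix x assume "x \<in> G ` Z"
    then obtain z where z: "z \<in> Z" "x = G z"
      by blast
    then obtain s where "s \<in> S" "z = F s"
      using ZX ZT F(3) by blast
    then show "x \<in> S"
      using z G(2) SX by auto
  qed
  moreover have "connected (G ` Z)"
    using connected_continuous_image[OF continuous_on_subset[OF G(1) ZX] in_components_connected[OF Z(1)]] .
  moreover have "C \<inter> G ` Z \<noteq> {}"
  proof -
    obtain c where "c \<in> C"
      using CS(2) by blast
    then have "c \<in> C \<inter> G ` Z"
      using Z(2) G(2) CS(1) SX by (metis IntI image_eqI image_subset_iff subsetD)
    then show ?thesis
      by blast
  qed
  ultimately have "G ` Z \<subseteq> C"
    using components_maximal[OF C] by blast
  have "Z \<subseteq> F ` C"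
  proof
    fix z assume "z \<in> Z"
    then obtain x where "x \<in> X" "z = F x"
      using ZX by blast
    then show "z \<in> F ` C"
      using \<open>G ` Z \<subseteq> C\<close> \<open>z \<in> Z\<close> G(2) by (metis image_eqI image_subset_iff)
  qed
  with Z show ?thesis
    using subset_antisym by blast
qed
lemma deck_group_components:
  assumes \<gamma>: "\<gamma> \<in> deck_group \<phi>" and C: "C \<in> components (unit_disc \<inter> \<phi> -` W)"
  shows "\<gamma> ` C \<in> components (unit_disc \<inter> \<phi> -` W)"
proof -
  note \<gamma>D = deck_groupD[OF \<gamma>]
  obtain G where G: "continuous_on (\<gamma> ` unit_disc) G" "\<And>z. z \<in> unit_disc \<Longrightarrow> G (\<gamma> z) = z"
    using holomorphic_inj_continuous_inverse[OF \<gamma>D(1) open_ball \<gamma>D(2)] by blast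
  let ?S = "unit_disc \<inter> \<phi> -` W"
  show ?thesis
  proof (rule image_in_components[OF C _ holomorphic_on_imp_continuous_on[OF \<gamma>D(1)] _ _ G])
    show "\<gamma> ` ?S \<subseteq> ?S"
      using \<gamma>D(3,4) by blast
    show "\<gamma> ` unit_disc \<inter> ?S \<subseteq> \<gamma> ` ?S"
    proof
      fix y assume "y \<in> \<gamma> ` unit_disc \<inter> ?S"
      then obtain x where "x \<in> unit_disc" "y = \<gamma> x" "\<phi> y \<in> W"
        by blast
      then show "y \<in> \<gamma> ` ?S"
        using \<gamma>D(4) by auto
    qed
    show "Z \<subseteq> \<gamma> ` unit_disc" if "Z \<in> components ?S" for Z
      using in_components_subset[OF that] \<gamma>D(3) by blast
  qed blast
qed

lemma covering_space_self_lifts_inverse: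
  fixes p :: "complex \<Rightarrow> complex"
  assumes cov: "covering_space C p S" and conn: "connected C"
    and \<alpha>: "continuous_on C \<alpha>" "\<alpha> \<in> C \<rightarrow> C" "\<And>z. z \<in> C \<Longrightarrow> p (\<alpha> z) = p z"
    and \<beta>: "continuous_on C \<beta>" "\<beta> \<in> C \<rightarrow> C" "\<And>z. z \<in> C \<Longrightarrow> p (\<beta> z) = p z"
    and c: "c \<in> C" "\<alpha> (\<beta> c) = c" and z: "z \<in> C"
  shows "\<alpha> (\<beta> z) = z"
proof -
  have "\<beta> ` C \<subseteq> C"
    using \<beta>(2) by blast
  then have cont: "continuous_on C (\<alpha> \<circ> \<beta>)"
    using continuous_on_compose[OF \<beta>(1) continuous_on_subset[OF \<alpha>(1)]] by blast
  have maps: "\<alpha> \<circ> \<beta> \<in> C \<rightarrow> C"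
    using \<alpha>(2) \<beta>(2) by (simp add: Pi_iff)
  have lifts: "p w = p ((\<alpha> \<circ> \<beta>) w)" if "w \<in> C" for w
    using \<alpha>(3) \<beta>(2,3) that by (simp add: Pi_iff)
  have "p \<in> C \<rightarrow> S"
    using covering_space_imp_surjective[OF cov] by blast
  from covering_space_lift_unique[OF cov _ covering_space_imp_continuous[OF cov] this cont maps lifts
      continuous_on_id' _ _ conn c(1) z]
  have "(\<alpha> \<circ> \<beta>) z = id z"
    using c(2) by simp
  then show ?thesis
    by simp
qed

lemma deck_group_transitive:
  assumes cov: "covering_space unit_disc \<phi> S" and hol: "\<phi> holomorphic_on unit_disc"
    and ab: "a \<in> unit_disc" "b \<in> unit_disc" "\<phi> a = \<phi> b"
  obtains \<gamma> where "\<gamma> \<in> deck_group \<phi>" "\<gamma> b = a"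
proof -
  have sc: "simply_connected unit_disc" and lpc: "locally path_connected unit_disc"
    by (simp_all add: convex_imp_simply_connected open_imp_locally_path_connected)
  note lift = covering_space_lift_strong[OF cov _ _ sc lpc covering_space_imp_continuous[OF cov]]
  have \<phi>S: "\<phi> \<in> unit_disc \<rightarrow> S"
    using covering_space_imp_surjective[OF cov] by blast
  obtain \<gamma> where \<gamma>: "continuous_on unit_disc \<gamma>" "\<gamma> \<in> unit_disc \<rightarrow> unit_disc" "\<gamma> b = a"
    "\<And>z. z \<in> unit_disc \<Longrightarrow> \<phi> (\<gamma> z) = \<phi> z"
    using lift[OF ab(1,2) \<phi>S ab(3)[symmetric]] by blast
  obtain \<delta> where \<delta>: "continuous_on unit_disc \<delta>" "\<delta> \<in> unit_disc \<rightarrow> unit_disc" "\<delta> a = b"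
    "\<And>z. z \<in> unit_disc \<Longrightarrow> \<phi> (\<delta> z) = \<phi> z"
    using lift[OF ab(2,1) \<phi>S ab(3)] by blast
  note inverse = covering_space_self_lifts_inverse[OF cov connected_ball]
  have "\<delta> (\<gamma> b) = b" "\<gamma> (\<delta> a) = a"
    using \<gamma>(3) \<delta>(3) by simp_all
  then have "\<delta> (\<gamma> z) = z" "\<gamma> (\<delta> z) = z" if "z \<in> unit_disc" for z
    using inverse[OF \<delta>(1,2,4) \<gamma>(1,2,4) ab(2) _ that] inverse[OF \<gamma>(1,2,4) \<delta>(1,2,4) ab(1) _ that]
    by blast+
  then have "bij_betw \<gamma> unit_disc unit_disc"
    using \<gamma>(2) \<delta>(2) by (intro bij_betw_byWitness[where f' = \<delta>]) (auto simp only: Pi_iff)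
  moreover have "\<gamma> holomorphic_on unit_disc"
    using covering_space_lift_is_holomorphic[OF cov open_ball hol hol \<phi>S \<gamma>(2,1,4)] .
  ultimately have "\<gamma> \<in> deck_group \<phi>"
    using \<gamma>(4) by (simp add: deck_group_def)
  with \<gamma>(3) show thesis
    using that by blast
qed

lemma deck_group_transitive_components:
  assumes cov: "covering_space unit_disc \<phi> S" and hol: "\<phi> holomorphic_on unit_disc"
    and A: "A \<in> components (unit_disc \<inter> \<phi> -` W)" and B: "B \<in> components (unit_disc \<inter> \<phi> -` W)"
    and meet: "\<phi> ` A \<inter> \<phi> ` B \<noteq> {}"
  obtains \<gamma> where "\<gamma> \<in> deck_group \<phi>" "\<gamma> ` A = B"
proof -
  obtain a b where ab: "a \<in> A" "b \<in> B" "\<phi> a = \<phi> b"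
    using meet by auto
  then have "a \<in> unit_disc" "b \<in> unit_disc"
    using in_components_subset[OF A] in_components_subset[OF B] by auto
  then obtain \<gamma> where \<gamma>: "\<gamma> \<in> deck_group \<phi>" "\<gamma> a = b"
    using deck_group_transitive[OF cov hol] ab(3) by metis
  have "\<gamma> ` A \<inter> B \<noteq> {}"
    using ab \<gamma>(2) by blast
  then have "\<gamma> ` A = B"
    using components_eq[OF deck_group_components[OF \<gamma>(1) A] B] by blast
  with \<gamma>(1) show thesis
    using that by blast
qed

corollary image_components_eq:
  assumes "covering_space unit_disc \<phi> S" "\<phi> holomorphic_on unit_disc"
    and "A \<in> components (unit_disc \<inter> \<phi> -` W)" "B \<in> components (unit_disc \<inter> \<phi> -` W)"
    and "\<phi> ` A \<inter> \<phi> ` B \<noteq> {}"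
  shows "\<phi> ` A = \<phi> ` B"
proof -
  obtain \<gamma> where \<gamma>: "\<gamma> \<in> deck_group \<phi>" "\<gamma> ` A = B"
    using deck_group_transitive_components[OF assms] .
  have "A \<subseteq> unit_disc"
    using in_components_subset[OF assms(3)] by blast
  then show ?thesis
    using image_deck_group[OF \<gamma>(1)] \<gamma>(2) by metis
qed


section \<open>Lifting the inverse branches\<close>

locale inverse_branch_lifts =
  fixes \<phi> f :: "complex \<Rightarrow> complex" and U J :: "complex set" and Us Vs :: "nat \<Rightarrow> complex set"
    and N d :: nat and g :: "nat \<Rightarrow> complex \<Rightarrow> complex" and idx :: "nat \<Rightarrow> nat"
  assumes cov: "covering_space unit_disc \<phi> (U - J)"
    and \<phi>_hol: "\<phi> holomorphic_on unit_disc"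
    and Us_open: "\<And>i. i < N \<Longrightarrow> open (Us i)"
    and Us_disj: "\<And>i j. i < N \<Longrightarrow> j < N \<Longrightarrow> i \<noteq> j \<Longrightarrow> Us i \<inter> Us j = {}"
    and Vs: "\<And>i. i < N \<Longrightarrow> Vs i \<in> components (unit_disc \<inter> \<phi> -` (Us i - J))"
    and g_hol: "\<And>j. j < d \<Longrightarrow> g j holomorphic_on unit_disc"
    and g_inj: "\<And>j. j < d \<Longrightarrow> inj_on (g j) unit_disc"
    and g_lift: "\<And>j z. j < d \<Longrightarrow> z \<in> unit_disc \<Longrightarrow> f (\<phi> (g j z)) = \<phi> z"
    and g_img: "\<And>j. j < d \<Longrightarrow> g j ` unit_disc = Vs (idx j)"
    and idx: "\<And>j. j < d \<Longrightarrow> idx j < N"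
begin

primrec stay :: "nat \<Rightarrow> complex set" where
  "stay 0 = U - J"
| "stay (Suc m) = ((\<Union>i<N. Us i) - J) \<inter> f -` stay m"

abbreviation lift_stay :: "nat \<Rightarrow> complex set" where
  "lift_stay m \<equiv> unit_disc \<inter> \<phi> -` stay m"

lemma component_subset_Vs:
  assumes Z: "Z \<in> components (lift_stay (Suc m))" and i: "i < N" and meet: "Z \<inter> Vs i \<noteq> {}"
  shows "Z \<subseteq> Vs i"
proof -
  have Zsub: "Z \<subseteq> unit_disc" "\<phi> ` Z \<subseteq> (\<Union>i<N. Us i) - J"
    using in_components_subset[OF Z] by auto
  have conn: "connected (\<phi> ` Z)"
    using connected_continuous_image[OF continuous_on_subset[OF covering_space_imp_continuous[OF cov] Zsub(1)]]
      in_components_connected[OF Z] by blast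
  have ne: "\<phi> ` Z \<noteq> {}"
    using in_components_nonempty[OF Z] by blast
  have disj: "pairwise disjnt (Us ` {..<N})"
    using Us_disj by (auto simp: pairwise_def disjnt_def)
  obtain T where "T \<in> Us ` {..<N}" "\<phi> ` Z \<subseteq> T"
  proof (rule connected_disjoint_Union_open_pick[OF disj, where A = "{\<phi> ` Z}" and S = "\<phi> ` Z"])
    show "\<Union>{\<phi> ` Z} \<subseteq> \<Union> (Us ` {..<N})"
      using Zsub(2) by blast
  qed (use conn ne Us_open that in \<open>blast+\<close>)
  then obtain k where k: "k < N" "\<phi> ` Z \<subseteq> Us k"
    by blast
  obtain z where z: "z \<in> Z" "z \<in> Vs i"
    using meet by blast
  have Vi: "Vs i \<subseteq> unit_disc \<inter> \<phi> -` (Us i - J)"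
    using in_components_subset[OF Vs[OF i]] .
  then have "\<phi> z \<in> Us k \<inter> Us i"
    using z k(2) by blast
  then have "k = i"
    using Us_disj[OF k(1) i] by blast
  then have "Z \<subseteq> unit_disc \<inter> \<phi> -` (Us i - J)"
    using Zsub k(2) by blast
  then show ?thesis
    using components_maximal[OF Vs[OF i] in_components_connected[OF Z]] meet by blast
qed

lemma g_image_lift_stay:
  assumes j: "j < d"
  shows "g j ` lift_stay m = g j ` unit_disc \<inter> lift_stay (Suc m)"
proof
  have Vi: "g j ` unit_disc \<subseteq> unit_disc \<inter> \<phi> -` (Us (idx j) - J)"
    using in_components_subset[OF Vs[OF idx[OF j]]] g_img[OF j] by simp
  show "g j ` lift_stay m \<subseteq> g j ` unit_disc \<inter> lift_stay (Suc m)"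
  proof
    fix y assume "y \<in> g j ` lift_stay m"
    then obtain x where x: "x \<in> unit_disc" "\<phi> x \<in> stay m" "y = g j x"
      by blast
    then have "y \<in> g j ` unit_disc" "\<phi> y \<in> Us (idx j) - J"
      using Vi by blast+
    moreover have "f (\<phi> y) \<in> stay m"
      using g_lift[OF j x(1)] x by simp
    ultimately show "y \<in> g j ` unit_disc \<inter> lift_stay (Suc m)"
      using idx[OF j] Vi by auto
  qed
  show "g j ` unit_disc \<inter> lift_stay (Suc m) \<subseteq> g j ` lift_stay m"
  proof
    fix y assume y: "y \<in> g j ` unit_disc \<inter> lift_stay (Suc m)"
    then obtain x where x: "x \<in> unit_disc" "y = g j x"
      by blast
    then have "\<phi> x \<in> stay m"
      using y g_lift[OF j x(1)] by auto
    then show "y \<in> g j ` lift_stay m"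
      using x by blast
  qed
qed

lemma g_image_in_components:
  assumes j: "j < d" and Y: "Y \<in> components (lift_stay m)"
  shows "g j ` Y \<in> components (lift_stay (Suc m))"
proof -
  obtain G where G: "continuous_on (g j ` unit_disc) G" "\<And>z. z \<in> unit_disc \<Longrightarrow> G (g j z) = z"
    using holomorphic_inj_continuous_inverse[OF g_hol[OF j] open_ball g_inj[OF j]] by blast
  show ?thesis
  proof (rule image_in_components[OF Y _ holomorphic_on_imp_continuous_on[OF g_hol[OF j]] _ _ G])
    show "Z \<subseteq> g j ` unit_disc" if Z: "Z \<in> components (lift_stay (Suc m))" "g j ` Y \<subseteq> Z" for Z
    proof -
      have "Y \<noteq> {}" "Y \<subseteq> unit_disc"
        using in_components_nonempty[OF Y] in_components_subset[OF Y] by auto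
      then have "Z \<inter> Vs (idx j) \<noteq> {}"
        using Z(2) g_img[OF j] by blast
      then show ?thesis
        using component_subset_Vs[OF Z(1) idx[OF j]] g_img[OF j] by simp
    qed
  qed (use g_image_lift_stay[OF j, of m] in blast)+
qed

section \<open>The families of deck transformations\<close>

text \<open>\<open>chain_set c eps\<close> is \<open>V_\<epsilon>\<close> for the family \<open>\<gamma>_l^\<epsilon> = c (\<epsilon>_l, ..., \<epsilon>_k)\<close>.\<close>
primrec chain_set :: "(nat list \<Rightarrow> complex \<Rightarrow> complex) \<Rightarrow> nat list \<Rightarrow> complex set" where
  "chain_set c [] = unit_disc"
| "chain_set c (e # r) = c (e # r) ` g e ` chain_set c r"

lemma chain_set_cong:
  assumes "\<And>e. length e \<le> length eps \<Longrightarrow> c e = c' e"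
  shows "chain_set c eps = chain_set c' eps"
  using assms by (induction eps) auto

lemma block_map_suffix_Cons:
  "block_map (\<lambda>eps l. c (drop (l - 1) eps)) g (e # r) =
     c (e # r) \<circ> g e \<circ> block_map (\<lambda>eps l. c (drop (l - 1) eps)) g r"
proof -
  have "[0..<length (e # r)] = 0 # map Suc [0..<length r]"
    using upt_conv_Cons map_Suc_upt by (metis length_Cons zero_less_Suc)
  then show ?thesis
    by (simp add: block_map_def o_def)
qed

lemma block_set_suffix_family:
  "block_set (\<lambda>eps l. c (drop (l - 1) eps)) g eps = chain_set c eps"
proof (induction eps)
  case Nil
  then show ?case
    by (simp add: block_set_def block_map_def)
next
  case (Cons e r)
  then show ?case
    unfolding block_set_def block_map_suffix_Cons by (simp only: image_comp[symmetric] chain_set.simps)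
qed

definition blocks :: "nat \<Rightarrow> nat list set" where
  "blocks n = {eps. set eps \<subseteq> {..<d} \<and> length eps = n}"

lemma blocks_SucE:
  assumes "eps \<in> blocks (Suc n)"
  obtains e r where "eps = e # r" "e < d" "r \<in> blocks n"
  using assms by (cases eps) (auto simp: blocks_def)

lemma butlast_in_blocks: "eps \<in> blocks (Suc n) \<Longrightarrow> butlast eps \<in> blocks n"
  by (auto simp: blocks_def dest: in_set_butlastD)

definition good_at :: "nat \<Rightarrow> (nat list \<Rightarrow> complex \<Rightarrow> complex) \<Rightarrow> bool" where
  "good_at n c \<longleftrightarrow> (\<forall>eps\<in>blocks n.
     (eps \<noteq> [] \<longrightarrow> c eps \<in> deck_group \<phi>) \<and>
     chain_set c eps \<in> components (lift_stay n) \<and>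
     chain_set c eps \<subseteq> chain_set c (butlast eps) \<and>
     (\<forall>eps'\<in>blocks n. \<phi> ` chain_set c eps = \<phi> ` chain_set c eps' \<longrightarrow> chain_set c eps = chain_set c eps'))"

lemma good_atD:
  assumes "good_at n c" "eps \<in> blocks n"
  shows "eps \<noteq> [] \<Longrightarrow> c eps \<in> deck_group \<phi>"
    and "chain_set c eps \<in> components (lift_stay n)"
    and "chain_set c eps \<subseteq> chain_set c (butlast eps)"
    and "eps' \<in> blocks n \<Longrightarrow> \<phi> ` chain_set c eps = \<phi> ` chain_set c eps' \<Longrightarrow> chain_set c eps = chain_set c eps'"
  using assms by (auto simp: good_at_def)

lemma good_at_cong:
  assumes "\<And>e. length e \<le> n \<Longrightarrow> c e = c' e"
  shows "good_at n c \<longleftrightarrow> good_at n c'"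
proof -
  have "c eps = c' eps \<and> chain_set c eps = chain_set c' eps \<and>
      chain_set c (butlast eps) = chain_set c' (butlast eps)" if "eps \<in> blocks n" for eps
    using assms that by (auto simp: blocks_def intro!: chain_set_cong)
  then show ?thesis
    unfolding good_at_def by (intro ball_cong) (simp_all cong: ball_cong)
qed

lemma good_at_0: "good_at 0 c"
proof -
  have "lift_stay 0 = unit_disc"
    using covering_space_imp_surjective[OF cov] by auto
  then have "unit_disc \<in> components (lift_stay 0)"
    by (simp add: in_components_self)
  then show ?thesis
    by (simp add: good_at_def blocks_def)
qed

definition lifted :: "(nat list \<Rightarrow> complex \<Rightarrow> complex) \<Rightarrow> nat list \<Rightarrow> complex set" where
  "lifted c eps = g (hd eps) ` chain_set c (tl eps)"

lemma chain_set_eq_lifted: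
  assumes "eps \<noteq> []" and "\<And>e. length e < length eps \<Longrightarrow> c' e = c e"
  shows "chain_set c' eps = c' eps ` lifted c eps"
proof (cases eps)
  case (Cons e r)
  then have "chain_set c' r = chain_set c r"
    using assms(2) by (intro chain_set_cong) simp
  with Cons show ?thesis
    by (simp add: lifted_def)
qed (use assms in simp)

text \<open>The choice depends on \<open>eps\<close> only through the parent and the projection of the lift;
  this is what makes the construction respect property (3).\<close>
definition canonical :: "(nat list \<Rightarrow> complex \<Rightarrow> complex) \<Rightarrow> nat list \<Rightarrow> complex set" where
  "canonical c eps = (SOME X. X \<in> components (lift_stay (length eps)) \<and>
     X \<subseteq> chain_set c (butlast eps) \<and> \<phi> ` X = \<phi> ` lifted c eps)"

context
  fixes k :: nat and c :: "nat list \<Rightarrow> complex \<Rightarrow> complex"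
  assumes good: "good_at k c"
begin

lemma lifted_in_components:
  assumes "eps \<in> blocks (Suc k)"
  shows "lifted c eps \<in> components (lift_stay (Suc k))"
proof -
  obtain e r where "eps = e # r" "e < d" "r \<in> blocks k"
    using blocks_SucE[OF assms] .
  then show ?thesis
    using g_image_in_components good_atD(2)[OF good] by (simp add: lifted_def)
qed

lemma lifted_nonempty_subset:
  assumes "eps \<in> blocks (Suc k)"
  shows "lifted c eps \<noteq> {}" "lifted c eps \<subseteq> unit_disc"
  using in_components_nonempty in_components_subset lifted_in_components[OF assms] by blast+

lemma lifted_moved_into_parent:
  assumes "eps \<in> blocks (Suc k)"
  obtains \<gamma> where "\<gamma> \<in> deck_group \<phi>" "\<gamma> ` lifted c eps \<subseteq> chain_set c (butlast eps)"
proof -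
  obtain e r where eps: "eps = e # r" and e: "e < d" and r: "r \<in> blocks k"
    using blocks_SucE[OF assms] .
  show thesis
  proof (cases "r = []")
    case True
    then have "id ` lifted c eps \<subseteq> chain_set c (butlast eps)"
      using lifted_nonempty_subset(2)[OF assms] eps by simp
    then show thesis
      using that id_in_deck_group by blast
  next
    case False
    then have parent: "butlast eps = e # butlast r"
      using eps by simp
    then have "e # butlast r \<in> blocks k"
      using butlast_in_blocks[OF assms] by simp
    then have "c (e # butlast r) \<in> deck_group \<phi>"
      using good_atD(1)[OF good] by blast
    moreover have "c (e # butlast r) ` lifted c eps \<subseteq> chain_set c (butlast eps)"
      using good_atD(3)[OF good r] eps parent by (auto simp: lifted_def)
    ultimately show thesis
      using that by blast
  qed
qed

lemma canonical_spec:
  assumes "eps \<in> blocks (Suc k)"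
  shows "canonical c eps \<in> components (lift_stay (Suc k))"
    and "canonical c eps \<subseteq> chain_set c (butlast eps)"
    and "\<phi> ` canonical c eps = \<phi> ` lifted c eps"
proof -
  obtain \<gamma> where \<gamma>: "\<gamma> \<in> deck_group \<phi>" "\<gamma> ` lifted c eps \<subseteq> chain_set c (butlast eps)"
    using lifted_moved_into_parent[OF assms] .
  have len: "length eps = Suc k"
    using assms by (simp add: blocks_def)
  have "\<gamma> ` lifted c eps \<in> components (lift_stay (length eps))"
    unfolding len by (rule deck_group_components[OF \<gamma>(1) lifted_in_components[OF assms]])
  moreover have "\<phi> ` \<gamma> ` lifted c eps = \<phi> ` lifted c eps"
    by (rule image_deck_group[OF \<gamma>(1) lifted_nonempty_subset(2)[OF assms]])
  ultimately have "\<exists>X. X \<in> components (lift_stay (length eps)) \<and>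
      X \<subseteq> chain_set c (butlast eps) \<and> \<phi> ` X = \<phi> ` lifted c eps"
    using \<gamma>(2) by (intro exI[of _ "\<gamma> ` lifted c eps"] conjI)
  then have "canonical c eps \<in> components (lift_stay (length eps)) \<and>
      canonical c eps \<subseteq> chain_set c (butlast eps) \<and> \<phi> ` canonical c eps = \<phi> ` lifted c eps"
    unfolding canonical_def by (rule someI_ex)
  then show "canonical c eps \<in> components (lift_stay (Suc k))"
    and "canonical c eps \<subseteq> chain_set c (butlast eps)" and "\<phi> ` canonical c eps = \<phi> ` lifted c eps"
    unfolding len by blast+
qed

lemma canonical_eq:
  assumes eps: "eps \<in> blocks (Suc k)" and eps': "eps' \<in> blocks (Suc k)"
    and eq: "\<phi> ` lifted c eps = \<phi> ` lifted c eps'"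
  shows "canonical c eps = canonical c eps'"
proof -
  have parents: "butlast eps \<in> blocks k" "butlast eps' \<in> blocks k"
    using butlast_in_blocks eps eps' by blast+
  have "\<phi> ` lifted c eps \<subseteq> \<phi> ` chain_set c (butlast eps)"
    "\<phi> ` lifted c eps' \<subseteq> \<phi> ` chain_set c (butlast eps')"
    using canonical_spec(3)[OF eps] image_mono[OF canonical_spec(2)[OF eps], of \<phi>]
      canonical_spec(3)[OF eps'] image_mono[OF canonical_spec(2)[OF eps'], of \<phi>] by simp_all
  moreover obtain x where "x \<in> lifted c eps"
    using lifted_nonempty_subset(1)[OF eps] by blast
  ultimately have "\<phi> x \<in> \<phi> ` chain_set c (butlast eps) \<inter> \<phi> ` chain_set c (butlast eps')"
    using eq by blast
  then have "\<phi> ` chain_set c (butlast eps) = \<phi> ` chain_set c (butlast eps')"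
    using image_components_eq[OF cov \<phi>_hol good_atD(2)[OF good parents(1)] good_atD(2)[OF good parents(2)]]
    by blast
  then have "chain_set c (butlast eps) = chain_set c (butlast eps')"
    by (rule good_atD(4)[OF good parents])
  moreover have "length eps = length eps'"
    using eps eps' by (simp add: blocks_def)
  ultimately show ?thesis
    unfolding canonical_def eq by simp
qed

lemma lifted_moved_to_canonical:
  assumes "eps \<in> blocks (Suc k)"
  obtains \<gamma> where "\<gamma> \<in> deck_group \<phi>" "\<gamma> ` lifted c eps = canonical c eps"
proof (rule deck_group_transitive_components[OF cov \<phi>_hol lifted_in_components[OF assms] canonical_spec(1)[OF assms]])
  show "\<phi> ` lifted c eps \<inter> \<phi> ` canonical c eps \<noteq> {}"
    using canonical_spec(3)[OF assms] lifted_nonempty_subset(1)[OF assms] by simp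
qed (use that in blast)

end

lemma good_at_extend:
  assumes good: "good_at k c"
  obtains c' where "good_at (Suc k) c'" "\<And>eps. length eps \<le> k \<Longrightarrow> c' eps = c eps"
proof -
  define c' where "c' eps = (if length eps = Suc k
      then SOME \<gamma>. \<gamma> \<in> deck_group \<phi> \<and> \<gamma> ` lifted c eps = canonical c eps else c eps)" for eps
  have agree: "c' eps = c eps" if "length eps \<le> k" for eps
    using that by (simp add: c'_def)
  have deck: "c' eps \<in> deck_group \<phi>" and chain: "chain_set c' eps = canonical c eps"
    if eps: "eps \<in> blocks (Suc k)" for eps
  proof -
    have ex: "\<exists>\<gamma>. \<gamma> \<in> deck_group \<phi> \<and> \<gamma> ` lifted c eps = canonical c eps"
      using lifted_moved_to_canonical[OF good eps] by metis
    have len: "length eps = Suc k"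
      using eps by (simp add: blocks_def)
    then have "c' eps \<in> deck_group \<phi> \<and> c' eps ` lifted c eps = canonical c eps"
      unfolding c'_def using someI_ex[OF ex] by simp
    moreover have "chain_set c' eps = c' eps ` lifted c eps"
      using len agree by (intro chain_set_eq_lifted) auto
    ultimately show "c' eps \<in> deck_group \<phi>" "chain_set c' eps = canonical c eps"
      by simp_all
  qed
  have parent: "chain_set c' (butlast eps) = chain_set c (butlast eps)" if "eps \<in> blocks (Suc k)" for eps
    using agree butlast_in_blocks[OF that] by (intro chain_set_cong) (simp add: blocks_def)
  have "good_at (Suc k) c'"
    unfolding good_at_def
  proof (intro ballI conjI impI)
    fix eps assume eps: "eps \<in> blocks (Suc k)"
    show "c' eps \<in> deck_group \<phi>"
      using deck[OF eps] .
    show "chain_set c' eps \<in> components (lift_stay (Suc k))"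
      using chain[OF eps] canonical_spec(1)[OF good eps] by simp
    show "chain_set c' eps \<subseteq> chain_set c' (butlast eps)"
      using chain[OF eps] parent[OF eps] canonical_spec(2)[OF good eps] by simp
    fix eps' assume eps': "eps' \<in> blocks (Suc k)" and eq: "\<phi> ` chain_set c' eps = \<phi> ` chain_set c' eps'"
    then have "\<phi> ` lifted c eps = \<phi> ` lifted c eps'"
      using chain[OF eps] chain[OF eps'] canonical_spec(3)[OF good eps] canonical_spec(3)[OF good eps'] by simp
    then show "chain_set c' eps = chain_set c' eps'"
      using chain[OF eps] chain[OF eps'] canonical_eq[OF good eps eps'] by simp
  qed
  with agree show thesis
    using that by blast
qed

lemma good_family_exists: "\<exists>c. \<forall>n. good_at n c"
proof -
  have "\<exists>C. \<forall>n. good_at n (C n) \<and> (\<forall>eps. length eps \<le> n \<longrightarrow> C (Suc n) eps = C n eps)"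
  proof (rule dependent_nat_choice)
    show "\<exists>c. good_at 0 c"
      using good_at_0 by blast
    show "\<exists>c'. good_at (Suc n) c' \<and> (\<forall>eps. length eps \<le> n \<longrightarrow> c' eps = c eps)"
      if "good_at n c" for n c
      using good_at_extend[OF that] by metis
  qed
  then obtain C where C: "\<And>n. good_at n (C n)"
    and C_Suc: "\<And>n eps. length eps \<le> n \<Longrightarrow> C (Suc n) eps = C n eps"
    by blast
  have stable: "C (length eps) eps = C n eps" if "length eps \<le> n" for n eps
    using that
  proof (induction n rule: dec_induct)
    case (step n)
    then show ?case
      using C_Suc[of eps n] by simp
  qed simp
  have "good_at n (\<lambda>eps. C (length eps) eps)" for n
    using C[of n] by (subst good_at_cong[where c' = "C n"]) (simp_all add: stable)
  then show ?thesis
    by blast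
qed


lemma suffix_families_exist:
  "\<exists>gam :: nat list \<Rightarrow> nat \<Rightarrow> complex \<Rightarrow> complex.
     (\<forall>eps. eps \<noteq> [] \<and> set eps \<subseteq> {..<d} \<longrightarrow>
        (\<forall>l\<in>{1..length eps}. gam eps l \<in> deck_group \<phi>)) \<and>
     (\<forall>eps. length eps \<ge> 2 \<and> set eps \<subseteq> {..<d} \<longrightarrow>
        block_set gam g eps \<subseteq> block_set gam g (butlast eps)) \<and>
     (\<forall>eps. length eps \<ge> 2 \<and> set eps \<subseteq> {..<d} \<longrightarrow>
        (\<forall>l\<in>{2..length eps}. gam eps l = gam (tl eps) (l - 1))) \<and>
     (\<forall>eps eps'. eps \<noteq> [] \<and> set eps \<subseteq> {..<d} \<and> set eps' \<subseteq> {..<d} \<and>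
        length eps' = length eps \<and> \<phi> ` block_set gam g eps = \<phi> ` block_set gam g eps' \<longrightarrow>
        block_set gam g eps = block_set gam g eps')"
proof -
  obtain c where good: "\<And>n. good_at n c"
    using good_family_exists by blast
  define gam where "gam eps l = c (drop (l - 1) eps)" for eps l
  have V: "block_set gam g eps = chain_set c eps" for eps
    unfolding gam_def by (rule block_set_suffix_family)
  have blocks: "eps \<in> blocks (length eps)" if "set eps \<subseteq> {..<d}" for eps
    using that by (simp add: blocks_def)
  show ?thesis
  proof (intro exI[of _ gam] conjI allI impI ballI)
    fix eps l assume "eps \<noteq> [] \<and> set eps \<subseteq> {..<d}" "l \<in> {1..length eps}"
    then have "drop (l - 1) eps \<noteq> []" "set (drop (l - 1) eps) \<subseteq> {..<d}"
      using set_drop_subset by fastforce+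
    then show "gam eps l \<in> deck_group \<phi>"
      unfolding gam_def using good_atD(1)[OF good blocks] by blast
  next
    fix eps assume "2 \<le> length eps \<and> set eps \<subseteq> {..<d}"
    then show "block_set gam g eps \<subseteq> block_set gam g (butlast eps)"
      unfolding V using good_atD(3)[OF good blocks] by blast
  next
    fix eps :: "nat list" and l :: nat
    assume "l \<in> {2..length eps}"
    then have "l - 1 = Suc (l - 1 - 1)"
      by auto
    then show "gam eps l = gam (tl eps) (l - 1)"
      unfolding gam_def by (metis drop_Suc)
  next
    fix eps eps' assume "eps \<noteq> [] \<and> set eps \<subseteq> {..<d} \<and> set eps' \<subseteq> {..<d} \<and>
      length eps' = length eps \<and> \<phi> ` block_set gam g eps = \<phi> ` block_set gam g eps'"
    then show "block_set gam g eps = block_set gam g eps'"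
      unfolding V using good_atD(4)[OF good blocks, of eps eps'] blocks[of eps'] by simp
  qed
qed

end

theorem mainTheorem3:
  fixes U :: "complex set" and Us :: "nat \<Rightarrow> complex set" and N d :: nat
    and f \<phi> :: "complex \<Rightarrow> complex" and w :: complex
    and ws :: "nat \<Rightarrow> complex" and idx :: "nat \<Rightarrow> nat"
    and Vs :: "nat \<Rightarrow> complex set" and g :: "nat \<Rightarrow> complex \<Rightarrow> complex"
  defines "U' \<equiv> (\<Union>i<N. Us i)"
  defines "J \<equiv> julia_set f U'"
  assumes U: "conf_disc U"
    and Ui: "\<And>i. i < N \<Longrightarrow> conf_disc (Us i)"
    and Ui_disj: "\<And>i j. i < N \<Longrightarrow> j < N \<Longrightarrow> i \<noteq> j \<Longrightarrow> Us i \<inter> Us j = {}"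
    and relcpt: "compact (closure U')" "closure U' \<subseteq> U"
    and f_hol: "f holomorphic_on U'"
    and f_proper: "proper_on f U' U"
    and f_deg: "hol_degree f U' U d" and d_gt: "d > 1"
    and KJ: "filled_set f U' = J"
    and cantor: "cantor_set J"
    and crit: "\<And>z. z \<in> U' \<Longrightarrow> deriv f z = 0 \<Longrightarrow> z \<in> filled_set f U'"
    and w: "w \<in> U - U'"
    and ws: "inj_on ws {..<d}" "{z\<in>U'. f z = w} = ws ` {..<d}"
    and idx: "\<And>j. j < d \<Longrightarrow> idx j < N \<and> ws j \<in> Us (idx j)"
    and phi_hol: "\<phi> holomorphic_on unit_disc"
    and phi_cov: "covering_space unit_disc \<phi> (U - J)"
    and phi0: "\<phi> 0 = w"
    and Vs: "\<And>i. i < N \<Longrightarrow> Vs i \<in> components (unit_disc \<inter> \<phi> -` (Us i - J))"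
    and g_hol: "\<And>j. j < d \<Longrightarrow> g j holomorphic_on unit_disc"
    and g_inj: "\<And>j. j < d \<Longrightarrow> inj_on (g j) unit_disc"
    and g_lift: "\<And>j z. j < d \<Longrightarrow> z \<in> unit_disc \<Longrightarrow> f (\<phi> (g j z)) = \<phi> z"
    and g0: "\<And>j. j < d \<Longrightarrow> \<phi> (g j 0) = ws j"
    and g_img: "\<And>j. j < d \<Longrightarrow> g j ` unit_disc = Vs (idx j)"
  shows "\<exists>gam :: nat list \<Rightarrow> nat \<Rightarrow> complex \<Rightarrow> complex.
     (\<forall>eps. eps \<noteq> [] \<and> set eps \<subseteq> {..<d} \<longrightarrow>
        (\<forall>l\<in>{1..length eps}. gam eps l \<in> deck_group \<phi>)) \<and>
     (\<forall>eps. length eps \<ge> 2 \<and> set eps \<subseteq> {..<d} \<longrightarrow>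
        block_set gam g eps \<subseteq> block_set gam g (butlast eps)) \<and>
     (\<forall>eps. length eps \<ge> 2 \<and> set eps \<subseteq> {..<d} \<longrightarrow>
        (\<forall>l\<in>{2..length eps}. gam eps l = gam (tl eps) (l - 1))) \<and>
     (\<forall>eps eps'. eps \<noteq> [] \<and> set eps \<subseteq> {..<d} \<and> set eps' \<subseteq> {..<d} \<and>
        length eps' = length eps \<and> \<phi> ` block_set gam g eps = \<phi> ` block_set gam g eps' \<longrightarrow>
        block_set gam g eps = block_set gam g eps')"
proof -
  interpret inverse_branch_lifts \<phi> f U J Us Vs N d g idx
  proof
    show "\<And>i. i < N \<Longrightarrow> open (Us i)"
      using Ui by (simp add: conf_disc_def)
    show "\<And>j. j < d \<Longrightarrow> idx j < N"
      using idx by blast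
  qed (fact phi_cov phi_hol Ui_disj Vs g_hol g_inj g_lift g_img)+
  show ?thesis
    by (rule suffix_families_exist)
qed

end
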